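(* Let $\Psi$ be a well-formed declarative context and $\tau$ a monotype. (i) If $\Psi\vdash A\le\tau$ then $\tau$ does not occur inside an arrow in $A$. (ii) If $\Psi\vdash\tau\le B$ then $\tau$ does not occur inside an arrow in $B$.
   Context: Types $A,B ::= 1\mid\alpha\mid\forall\alpha.A\mid A\to B$; monotypes $\tau ::= 1\mid\alpha\mid\tau\to\tau'$. Declarative contexts $\Psi ::= \cdot\mid\Psi,\alpha\mid\Psi,x:A$. Well-formedness $\Psi\vdash A$: all free type variables of $A$ are declared in $\Psi$. Declarative subtyping $\Psi\vdash A\le B$ is the least relation with: $\alpha\in\Psi\Rightarrow\Psi\vdash\alpha\le\alpha$; $\Psi\vdash1\le1$; ($\Psi\vdash B_1\le A_1$, $\Psi\vdash A_2\le B_2$) $\Rightarrow\Psi\vdash A_1\to A_2\le B_1\to B_2$; ($\Psi\vdash\sigma$ monotype, $\Psi\vdash[\sigma/\alpha]A\le B$) $\Rightarrow\Psi\vdash\forall\alpha.A\le B$; ($\Psi,\beta\vdash A\le B$) $\Rightarrow\Psi\vdash A\le\forall\beta.B$. $A$ is a subterm of $B$ if $A$ occurs syntactically in $B$ (including $A=B$). $A$ occurs inside an arrow in $B$ iff there exist $B_1,B_2$ such that $B_1\to B_2$ is a subterm of $B$ and $A$ is a subterm of $B_1$ or of $B_2$. *)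

theory Defs
  imports Main
begin

datatype ty = TUnit | TVar nat | TForall nat ty | TArr ty ty

fun monotype :: "ty \<Rightarrow> bool" where
  "monotype TUnit = True"
| "monotype (TVar a) = True"
| "monotype (TForall a A) = False"
| "monotype (TArr A B) = (monotype A \<and> monotype B)"

fun ftv :: "ty \<Rightarrow> nat set" where
  "ftv TUnit = {}"
| "ftv (TVar a) = {a}"
| "ftv (TForall a A) = ftv A - {a}"
| "ftv (TArr A B) = ftv A \<union> ftv B"

fun allv :: "ty \<Rightarrow> nat set" where
  "allv TUnit = {}"
| "allv (TVar a) = {a}"
| "allv (TForall a A) = insert a (allv A)"
| "allv (TArr A B) = allv A \<union> allv B"

lemma finite_allv: "finite (allv A)"
  by (induction A) auto

lemma finite_ftv: "finite (ftv A)"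
  by (induction A) auto

text \<open>Naive (non capture-avoiding) renaming, only used with a fresh target name.\<close>
fun rename :: "nat \<Rightarrow> nat \<Rightarrow> ty \<Rightarrow> ty" where
  "rename b c TUnit = TUnit"
| "rename b c (TVar a) = TVar (if a = b then c else a)"
| "rename b c (TForall a A) = (if a = b then TForall a A else TForall a (rename b c A))"
| "rename b c (TArr A B) = TArr (rename b c A) (rename b c B)"

lemma size_rename[simp]: "size (rename b c A) = size A"
  by (induction A) auto

definition fresh :: "nat set \<Rightarrow> nat" where
  "fresh S = Suc (Max (insert 0 S))"

text \<open>Capture-avoiding substitution \<open>[s/a]A\<close>, written \<open>subst s a A\<close>.\<close>
function subst :: "ty \<Rightarrow> nat \<Rightarrow> ty \<Rightarrow> ty" where
  "subst s a TUnit = TUnit"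
| "subst s a (TVar b) = (if b = a then s else TVar b)"
| "subst s a (TForall b A) =
     (if b = a then TForall b A
      else if b \<in> ftv s then
        (let c = fresh (allv A \<union> ftv s \<union> {a, b}) in TForall c (subst s a (rename b c A)))
      else TForall b (subst s a A))"
| "subst s a (TArr A B) = TArr (subst s a A) (subst s a B)"
  by pat_completeness auto
termination
  by (relation "measure (\<lambda>(s, a, A). size A)") auto

text \<open>Declarative contexts, extended on the right.\<close>
datatype centry = CTV nat | CV string ty

fun ctvars :: "centry list \<Rightarrow> nat set" where
  "ctvars [] = {}"
| "ctvars (CTV a # G) = insert a (ctvars G)"
| "ctvars (CV x A # G) = ctvars G"

fun cvars :: "centry list \<Rightarrow> string set" where
  "cvars [] = {}"
| "cvars (CTV a # G) = cvars G"
| "cvars (CV x A # G) = insert x (cvars G)"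

definition wf_typ :: "centry list \<Rightarrow> ty \<Rightarrow> bool" where
  "wf_typ G A \<longleftrightarrow> ftv A \<subseteq> ctvars G"

inductive wf_ctx :: "centry list \<Rightarrow> bool" where
  wf_nil: "wf_ctx []"
| wf_tv: "wf_ctx G \<Longrightarrow> a \<notin> ctvars G \<Longrightarrow> wf_ctx (G @ [CTV a])"
| wf_v: "wf_ctx G \<Longrightarrow> x \<notin> cvars G \<Longrightarrow> wf_typ G A \<Longrightarrow> wf_ctx (G @ [CV x A])"

inductive sub :: "centry list \<Rightarrow> ty \<Rightarrow> ty \<Rightarrow> bool" where
  sub_var: "a \<in> ctvars G \<Longrightarrow> sub G (TVar a) (TVar a)"
| sub_unit: "sub G TUnit TUnit"
| sub_arr: "sub G B1 A1 \<Longrightarrow> sub G A2 B2 \<Longrightarrow> sub G (TArr A1 A2) (TArr B1 B2)"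
| sub_alll: "wf_typ G s \<Longrightarrow> monotype s \<Longrightarrow> sub G (subst s a A) B \<Longrightarrow> sub G (TForall a A) B"
| sub_allr: "sub (G @ [CTV b]) A B \<Longrightarrow> sub G A (TForall b B)"

fun subterms :: "ty \<Rightarrow> ty set" where
  "subterms TUnit = {TUnit}"
| "subterms (TVar a) = {TVar a}"
| "subterms (TForall a A) = insert (TForall a A) (subterms A)"
| "subterms (TArr A B) = insert (TArr A B) (subterms A \<union> subterms B)"

definition occurs_in_arrow :: "ty \<Rightarrow> ty \<Rightarrow> bool" where
  "occurs_in_arrow A B \<longleftrightarrow>
     (\<exists>B1 B2. TArr B1 B2 \<in> subterms B \<and> (A \<in> subterms B1 \<or> A \<in> subterms B2))"

end

theory Submission
  imports Defs
begin

text \<open>Measure types by the size of their quantifier-free skeleton. Instantiating a quantifier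
  never shrinks this size, so by induction on subtyping derivations a subtype of a monotype
  is no larger than it, and a supertype of a monotype is no larger than it either (the two
  claims must be proved together because of the contravariant arrow rule). A type occurring
  inside an arrow of \<open>A\<close> is strictly smaller than \<open>A\<close>, so a monotype cannot occur inside an
  arrow of a type it is related to.\<close>

fun erased_size :: "ty \<Rightarrow> nat" where
  "erased_size TUnit = 1"
| "erased_size (TVar a) = 1"
| "erased_size (TForall a A) = erased_size A"
| "erased_size (TArr A B) = erased_size A + erased_size B + 1"

lemma erased_size_pos: "erased_size A \<ge> 1"
  by (induction A) auto

lemma erased_size_rename [simp]: "erased_size (rename b c A) = erased_size A"
  by (induction A) auto

lemma erased_size_le_subst: "erased_size A \<le> erased_size (subst s a A)"
proof (induction s a A rule: subst.induct)
  case (2 s a b)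
  then show ?case using erased_size_pos[of s] by auto
next
  case (3 s a b A)
  then show ?case by (auto simp: Let_def)
qed auto

lemma sub_erased_size_monotype:
  assumes "sub G A B"
  shows "(monotype B \<longrightarrow> erased_size A \<le> erased_size B)
       \<and> (monotype A \<longrightarrow> erased_size B \<le> erased_size A)"
  using assms
proof (induction rule: sub.induct)
  case (sub_alll G s a A B)
  then show ?case using erased_size_le_subst[of A s a] by auto
qed auto

lemma erased_size_subterm_le: "C \<in> subterms D \<Longrightarrow> erased_size C \<le> erased_size D"
  by (induction D) auto

lemma occurs_in_arrow_erased_size_less:
  assumes "occurs_in_arrow C D"
  shows "erased_size C < erased_size D"
proof -
  obtain B1 B2 where arr: "TArr B1 B2 \<in> subterms D"
    and C_in: "C \<in> subterms B1 \<or> C \<in> subterms B2"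
    using assms unfolding occurs_in_arrow_def by blast
  have "erased_size C < erased_size (TArr B1 B2)"
    using C_in erased_size_subterm_le[of C B1] erased_size_subterm_le[of C B2] by auto
  also have "\<dots> \<le> erased_size D"
    using erased_size_subterm_le[OF arr] .
  finally show ?thesis .
qed

theorem mainTheorem14:
  assumes "wf_ctx G" and "monotype t"
  shows "(\<forall>A. sub G A t \<longrightarrow> \<not> occurs_in_arrow t A)
       \<and> (\<forall>B. sub G t B \<longrightarrow> \<not> occurs_in_arrow t B)"
proof (intro conjI allI impI notI)
  fix A
  assume "sub G A t" and "occurs_in_arrow t A"
  then show False
    using assms(2) sub_erased_size_monotype occurs_in_arrow_erased_size_less by fastforce
next
  fix B
  assume "sub G t B" and "occurs_in_arrow t B"
  then show False
    using assms(2) sub_erased_size_monotype occurs_in_arrow_erased_size_less by fastforce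
qed

end
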